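(* Let a project have finite state space $\mathbb{X}$, transition probabilities $p(i,j)$, discount factor $0<\beta\le1$ and horizon $T$. For a tuple $A=(A_1,\dots,A_T)$ of subsets of $\mathbb{X}$ and $1\le d\le T$, $i\in\mathbb{X}$, let $g_d^A(i)=\mathsf{E}_i[\sum_{t=0}^{\tau-1}\beta^t]$ be the expected total discounted time the project is engaged starting in state $i$ with $d$ remaining periods under the stopping rule $\tau$ that, at time $t<d$ engages the project iff $X(t)\in A_{d-t}$, and stops at the first time this fails or when $t=d$; and let $w_d^A(i)=g_d^{A\cup\{(d,i)\}}(i)$, where $A\cup\{(s,j)\}$ denotes the tuple obtained from $A$ by replacing $A_s$ with $A_s\cup\{j\}$. Let $A$ satisfy $A_1\subseteq\dots\subseteq A_T\subseteq\mathbb{X}$. Then for $1\le d\le T$, $i\in\mathbb{X}$: (a) $w_d^A(i)=1+\beta\sum_{j\in A_{d-1}}p(i,j)w_{d-1}^A(j)$ if $d\ge2$, and $w_1^A(i)=1$. (b) $w_d^{A\cup\{(d,i^* )\}}(i)=w_d^A(i)$ for $i^*\in\mathbb{X}\setminus A_d$. (c) $w_d^{A\cup\{(d-1,i^* )\}}(i)=w_d^A(i)+\beta p(i,i^* )w_{d-1}^A(i^* )$ for $i^*\in A_d\setminus A_{d-1}$ (with $d\ge2$). (d) $w_d^{A\cup\{(s,i^* )\}}(i)=1+\beta\sum_{j\in A_{d-1}}p(i,j)w_{d-1}^{A\cup\{(s,i^* )\}}(j)$ for $1\le s\le d-2$ and $i^*\in A_{s+1}\setminus A_s$.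
   Context: $w_d^A(i)$ is the modified work measure: the work measure of the stopping rule with continuation sets $A$, modified so that the project is engaged at least at time 0 in state $i$ with $d$ periods remaining. *)

theory Defs
  imports Complex_Main
begin

text \<open>Transition matrix p. Continuation
  sets A k for k = 1..T (values outside this range are irrelevant).
  A path of length t+1 is a list xs with xs!0 = i; the project is still engaged
  at time t iff xs!s \<in> A (d - s) for all s \<le> t.\<close>

definition path_prob :: "('x \<Rightarrow> 'x \<Rightarrow> real) \<Rightarrow> 'x list \<Rightarrow> real" where
  "path_prob p xs = (\<Prod>s<length xs - 1. p (xs ! s) (xs ! Suc s))"

text \<open>Probability P_i(tau > t) under the stopping rule with continuation sets A,
  d periods remaining.\<close>
definition prob_continue ::
  "('x::finite \<Rightarrow> 'x \<Rightarrow> real) \<Rightarrow> (nat \<Rightarrow> 'x set) \<Rightarrow> nat \<Rightarrow> 'x \<Rightarrow> nat \<Rightarrow> real" where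
  "prob_continue p A d i t =
     (\<Sum>xs\<in>{xs. length xs = Suc t \<and> xs ! 0 = i \<and> (\<forall>s\<le>t. xs ! s \<in> A (d - s))}.
        path_prob p xs)"

text \<open>g_d^A(i) = E_i[sum_{t<tau} beta^t] = sum_{t<d} beta^t P_i(tau > t)
  (tau \<le> d always).\<close>
definition work_g ::
  "('x::finite \<Rightarrow> 'x \<Rightarrow> real) \<Rightarrow> real \<Rightarrow> (nat \<Rightarrow> 'x set) \<Rightarrow> nat \<Rightarrow> 'x \<Rightarrow> real" where
  "work_g p \<beta> A d i = (\<Sum>t<d. \<beta> ^ t * prob_continue p A d i t)"

definition add_pair :: "(nat \<Rightarrow> 'x set) \<Rightarrow> nat \<Rightarrow> 'x \<Rightarrow> (nat \<Rightarrow> 'x set)" where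
  "add_pair A s j = A(s := insert j (A s))"

definition work_w ::
  "('x::finite \<Rightarrow> 'x \<Rightarrow> real) \<Rightarrow> real \<Rightarrow> (nat \<Rightarrow> 'x set) \<Rightarrow> nat \<Rightarrow> 'x \<Rightarrow> real" where
  "work_w p \<beta> A d i = work_g p \<beta> (add_pair A d i) d i"

end

theory Submission
  imports Defs
begin

text \<open>Conditioning on the first step gives the recursion
  \<open>g\<^sub>n\<^sub>+\<^sub>1\<^sup>A(i) = [i \<in> A\<^sub>n\<^sub>+\<^sub>1] (1 + \<beta> \<Sum>\<^sub>j\<^sub>\<in>\<^sub>A\<^sub>n p(i,j) g\<^sub>n\<^sup>A(j))\<close>,
  and \<open>g\<^sub>n\<^sup>A\<close> depends only on \<open>A\<^sub>1, \<dots>, A\<^sub>n\<close>. Every identity of the lemma is then a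
  rearrangement of this recursion: enlarging \<open>A\<^sub>d\<close> does not affect a rule that is forced
  to engage at time 0, and enlarging \<open>A\<^sub>d\<^sub>-\<^sub>1\<close> by \<open>i\<^sup>*\<close> adds exactly the term for the
  first step into \<open>i\<^sup>*\<close>. In particular the identities hold for arbitrary real \<open>p\<close> and
  \<open>\<beta>\<close> and without monotonicity of \<open>A\<close>.\<close>

definition continue_paths :: "(nat \<Rightarrow> 'x set) \<Rightarrow> nat \<Rightarrow> 'x \<Rightarrow> nat \<Rightarrow> 'x list set" where
  "continue_paths A d i t =
     {xs. length xs = Suc t \<and> xs ! 0 = i \<and> (\<forall>s\<le>t. xs ! s \<in> A (d - s))}"

lemma prob_continue_eq_sum_continue_paths:
  "prob_continue p A d i t = sum (path_prob p) (continue_paths A d i t)"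
  by (simp add: prob_continue_def continue_paths_def)

lemma finite_continue_paths: "finite (continue_paths A d (i::'x::finite) t)"
  by (rule finite_subset[OF _ finite_lists_length_eq[of "UNIV :: 'x set" "Suc t"]])
    (auto simp: continue_paths_def)

lemma continue_paths_0: "continue_paths A d i 0 = (if i \<in> A d then {[i]} else {})"
  by (auto simp: continue_paths_def length_Suc_conv)

lemma continue_paths_Suc_out:
  "i \<notin> A (Suc n) \<Longrightarrow> continue_paths A (Suc n) i (Suc t) = {}"
  by (auto simp: continue_paths_def)

lemma continue_paths_Suc:
  assumes "i \<in> A (Suc n)"
  shows "continue_paths A (Suc n) i (Suc t)
           = (\<lambda>(j, ys). i # ys) ` (SIGMA j:A n. continue_paths A n j t)"
proof
  show "continue_paths A (Suc n) i (Suc t)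
          \<subseteq> (\<lambda>(j, ys). i # ys) ` (SIGMA j:A n. continue_paths A n j t)"
  proof
    fix xs assume "xs \<in> continue_paths A (Suc n) i (Suc t)"
    then obtain ys where xs: "xs = i # ys" and len: "length ys = Suc t"
      and engaged: "\<forall>s\<le>Suc t. xs ! s \<in> A (Suc n - s)"
      by (auto simp: continue_paths_def length_Suc_conv)
    have "ys ! s \<in> A (n - s)" if "s \<le> t" for s
      using engaged[rule_format, of "Suc s"] that xs by simp
    moreover from this[of 0] have "ys ! 0 \<in> A n"
      by simp
    ultimately have "(ys ! 0, ys) \<in> (SIGMA j:A n. continue_paths A n j t)"
      using len by (simp add: continue_paths_def)
    then show "xs \<in> (\<lambda>(j, ys). i # ys) ` (SIGMA j:A n. continue_paths A n j t)"
      using xs by force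
  qed
  show "(\<lambda>(j, ys). i # ys) ` (SIGMA j:A n. continue_paths A n j t)
          \<subseteq> continue_paths A (Suc n) i (Suc t)"
    using assms by (auto simp: continue_paths_def nth_Cons split: nat.splits)
qed

lemma path_prob_Cons: "ys \<noteq> [] \<Longrightarrow> path_prob p (i # ys) = p i (ys ! 0) * path_prob p ys"
  by (cases ys) (simp_all add: path_prob_def prod.lessThan_Suc_shift del: prod.lessThan_Suc)

lemma prob_continue_0: "prob_continue p A d i 0 = (if i \<in> A d then 1 else 0)"
  by (simp add: prob_continue_eq_sum_continue_paths continue_paths_0 path_prob_def)

lemma prob_continue_Suc:
  "prob_continue p A (Suc n) i (Suc t) =
     (if i \<in> A (Suc n) then (\<Sum>j\<in>A n. p i j * prob_continue p A n j t) else 0)"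
proof (cases "i \<in> A (Suc n)")
  case False
  then show ?thesis
    by (simp add: prob_continue_eq_sum_continue_paths continue_paths_Suc_out)
next
  case True
  let ?S = "SIGMA j:A n. continue_paths A n j t"
  have "inj_on (\<lambda>(j, ys). i # ys) ?S"
    by (auto simp: inj_on_def continue_paths_def)
  then have "prob_continue p A (Suc n) i (Suc t) = (\<Sum>(j, ys)\<in>?S. path_prob p (i # ys))"
    unfolding prob_continue_eq_sum_continue_paths continue_paths_Suc[where A = A, OF True]
    by (subst sum.reindex) (simp_all add: case_prod_beta comp_def)
  also have "\<dots> = (\<Sum>j\<in>A n. \<Sum>ys\<in>continue_paths A n j t. path_prob p (i # ys))"
    by (rule sum.Sigma[symmetric]) (auto simp: finite_continue_paths)
  also have "\<dots> = (\<Sum>j\<in>A n. p i j * prob_continue p A n j t)"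
  proof (rule sum.cong[OF refl])
    fix j
    have "path_prob p (i # ys) = p i j * path_prob p ys" if "ys \<in> continue_paths A n j t" for ys
      using that by (subst path_prob_Cons) (auto simp: continue_paths_def)
    then show "(\<Sum>ys\<in>continue_paths A n j t. path_prob p (i # ys)) = p i j * prob_continue p A n j t"
      by (simp add: prob_continue_eq_sum_continue_paths sum_distrib_left)
  qed
  finally show ?thesis
    using True by simp
qed

lemma work_g_0 [simp]: "work_g p \<beta> A 0 i = 0"
  by (simp add: work_g_def)

lemma work_g_Suc:
  "work_g p \<beta> A (Suc n) i =
     (if i \<in> A (Suc n) then 1 + \<beta> * (\<Sum>j\<in>A n. p i j * work_g p \<beta> A n j) else 0)"
proof -
  have "work_g p \<beta> A (Suc n) i = prob_continue p A (Suc n) i 0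
          + (\<Sum>t<n. \<beta> ^ Suc t * prob_continue p A (Suc n) i (Suc t))"
    unfolding work_g_def by (subst sum.lessThan_Suc_shift) simp
  then show ?thesis
    by (simp add: prob_continue_0 prob_continue_Suc work_g_def sum_distrib_left
        sum_distrib_right mult_ac sum.swap[of _ "A n"])
qed

lemma work_g_cong:
  "(\<And>k. 1 \<le> k \<Longrightarrow> k \<le> n \<Longrightarrow> A k = B k) \<Longrightarrow> work_g p \<beta> A n i = work_g p \<beta> B n i"
proof (induction n arbitrary: i)
  case (Suc n)
  have "work_g p \<beta> A n j = work_g p \<beta> B n j" for j
    using Suc by simp
  moreover have "n = 0 \<or> A n = B n"
    using Suc.prems[of n] by linarith
  ultimately show ?case
    using Suc.prems[of "Suc n"] by (auto simp: work_g_Suc)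
qed simp

lemma add_pair_apply: "add_pair A s j k = (if k = s then insert j (A s) else A k)"
  by (simp add: add_pair_def)

lemma add_pair_absorb: "j \<in> A s \<Longrightarrow> add_pair A s j = A"
  by (simp add: add_pair_def insert_absorb)

lemma work_g_add_pair_mem:
  assumes "j \<in> A n"
  shows "work_g p \<beta> (add_pair A n x) n j = work_g p \<beta> A n j"
proof (cases n)
  case (Suc m)
  have "work_g p \<beta> (add_pair A n x) m k = work_g p \<beta> A m k" for k
    by (rule work_g_cong) (simp add: add_pair_apply Suc)
  then show ?thesis
    using assms by (simp add: Suc work_g_Suc add_pair_apply)
qed simp

lemma work_w_Suc_work_g:
  "work_w p \<beta> A (Suc n) i = 1 + \<beta> * (\<Sum>j\<in>A n. p i j * work_g p \<beta> A n j)"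
proof -
  have "work_g p \<beta> (add_pair A (Suc n) i) n j = work_g p \<beta> A n j" for j
    by (rule work_g_cong) (simp add: add_pair_apply)
  then show ?thesis
    unfolding work_w_def by (subst work_g_Suc) (simp add: add_pair_apply)
qed

lemma work_w_Suc:
  "work_w p \<beta> A (Suc n) i = 1 + \<beta> * (\<Sum>j\<in>A n. p i j * work_w p \<beta> A n j)"
proof -
  have "work_w p \<beta> A n j = work_g p \<beta> A n j" if "j \<in> A n" for j
    using that by (simp add: work_w_def add_pair_absorb)
  then show ?thesis
    by (simp add: work_w_Suc_work_g)
qed

lemma work_w_add_pair_same_level:
  "work_w p \<beta> (add_pair A d x) d i = work_w p \<beta> A d i"
proof (cases d)
  case 0
  then show ?thesis by (simp add: work_w_def)
next
  case (Suc n)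
  have "work_g p \<beta> (add_pair A d x) n j = work_g p \<beta> A n j" for j
    by (rule work_g_cong) (simp add: add_pair_apply Suc)
  then show ?thesis
    by (simp add: Suc work_w_Suc_work_g add_pair_apply)
qed

lemma work_w_add_pair_prev_level:
  assumes "x \<notin> A n"
  shows "work_w p \<beta> (add_pair A n x) (Suc n) i
           = work_w p \<beta> A (Suc n) i + \<beta> * p i x * work_w p \<beta> A n x"
proof -
  let ?C = "add_pair A n x"
  have "work_w p \<beta> ?C (Suc n) i
          = 1 + \<beta> * (p i x * work_g p \<beta> ?C n x + (\<Sum>j\<in>A n. p i j * work_g p \<beta> ?C n j))"
    using assms by (simp add: work_w_Suc_work_g add_pair_apply)
  also have "\<dots> = 1 + \<beta> * (p i x * work_w p \<beta> A n x + (\<Sum>j\<in>A n. p i j * work_g p \<beta> A n j))"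
    by (simp add: work_w_def work_g_add_pair_mem)
  also have "\<dots> = work_w p \<beta> A (Suc n) i + \<beta> * p i x * work_w p \<beta> A n x"
    by (simp add: work_w_Suc_work_g algebra_simps)
  finally show ?thesis .
qed

theorem lemma2:
  fixes p :: "'x::finite \<Rightarrow> 'x \<Rightarrow> real" and \<beta> :: real and T d :: nat
    and A :: "nat \<Rightarrow> 'x set" and i :: 'x
  assumes p_nonneg: "\<And>i j. p i j \<ge> 0"
    and p_stoch: "\<And>i. (\<Sum>j\<in>UNIV. p i j) = 1"
    and beta: "0 < \<beta>" "\<beta> \<le> 1"
    and mono: "\<And>k. 1 \<le> k \<Longrightarrow> k < T \<Longrightarrow> A k \<subseteq> A (Suc k)"
    and d: "1 \<le> d" "d \<le> T"
  shows
    "(d \<ge> 2 \<longrightarrow> work_w p \<beta> A d i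
         = 1 + \<beta> * (\<Sum>j\<in>A (d - 1). p i j * work_w p \<beta> A (d - 1) j))
     \<and> (d = 1 \<longrightarrow> work_w p \<beta> A 1 i = 1)
     \<and> (\<forall>istar. istar \<notin> A d \<longrightarrow>
          work_w p \<beta> (add_pair A d istar) d i = work_w p \<beta> A d i)
     \<and> (\<forall>istar. d \<ge> 2 \<longrightarrow> istar \<in> A d - A (d - 1) \<longrightarrow>
          work_w p \<beta> (add_pair A (d - 1) istar) d i
            = work_w p \<beta> A d i + \<beta> * p i istar * work_w p \<beta> A (d - 1) istar)
     \<and> (\<forall>s istar. 1 \<le> s \<longrightarrow> s + 2 \<le> d \<longrightarrow> istar \<in> A (Suc s) - A s \<longrightarrow>
          work_w p \<beta> (add_pair A s istar) d i
            = 1 + \<beta> * (\<Sum>j\<in>A (d - 1). p i j * work_w p \<beta> (add_pair A s istar) (d - 1) j))"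
proof -
  obtain n where dn: "d = Suc n"
    using d by (cases d) auto
  have first_step: "work_w p \<beta> B d i = 1 + \<beta> * (\<Sum>j\<in>B (d - 1). p i j * work_w p \<beta> B (d - 1) j)"
    for B
    by (simp add: dn work_w_Suc)
  have "add_pair A s x (d - 1) = A (d - 1)" if "s + 2 \<le> d" for s x
    using that by (auto simp: add_pair_apply)
  then have part_d: "work_w p \<beta> (add_pair A s x) d i
               = 1 + \<beta> * (\<Sum>j\<in>A (d - 1). p i j * work_w p \<beta> (add_pair A s x) (d - 1) j)"
    if "s + 2 \<le> d" for s x
    using that first_step[of "add_pair A s x"] by simp
  have part_c: "work_w p \<beta> (add_pair A (d - 1) x) d i
                  = work_w p \<beta> A d i + \<beta> * p i x * work_w p \<beta> A (d - 1) x"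
    if "x \<notin> A (d - 1)" for x
    using that work_w_add_pair_prev_level[of x A n] by (simp add: dn)
  have "work_w p \<beta> A 1 i = 1"
    by (simp add: work_w_Suc_work_g)
  then show ?thesis
    using first_step[of A] work_w_add_pair_same_level part_c part_d by blast
qed

end
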